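(* Let $D$ be a distribution over $\mathcal{X}\times\mathcal{Y}$ ($\mathcal{X}\subset\mathbb{R}^d$, $\mathcal{Y}=\{1,\dots,c\}$) that is $(k_1,\dots,k_n)$-separable with $\delta$-margin, and let $f:\mathcal{Y}\to\mathbb{R}^m$ be injective, regarding $f(y)$ as the desired output for an input $x$ with label $y$. Let $K=\prod_{s=1}^n k_s$. Then for every $\epsilon>0$ there exists a 4-layer network $g:\mathcal{X}\to\mathbb{R}^m$ of the form $$p^s(x)=\sum_{l=1}^{k_s} v_{s,l}\,\rho(u_s^Tx-\beta_{s,l})\ (s=1,\dots,n),\qquad p(x)=(p^1(x),\dots,p^n(x))^T,$$ $$g(x)=W^T\big(\rho(u^Tp(x)-\gamma_1),\dots,\rho(u^Tp(x)-\gamma_K)\big)^T,$$ with $u_s\in\mathbb{R}^d$, $\beta_{s,l},v_{s,l}\in\mathbb{R}$, $u\in\mathbb{R}^n$, $\gamma_1,\dots,\gamma_K\in\mathbb{R}$, $W\in\mathbb{R}^{K\times m}$ — thus with $n(d+1)+2\sum_{s=1}^n k_s+(m+1)\prod_{s=1}^n k_s$ parameters — such that $$\mathbb{P}_{(x,y)\sim D}\Big(\max_{1\le j\le m}|g_j(x)-f_j(y)|>\epsilon\Big)=0,$$ where $g_j,f_j$ denote $j$-th components.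
   Context: $\rho(t)=1/(1+e^{-t})$ is the sigmoid function. Definition ($(k_1,\dots,k_n)$-separable with $\delta$-margin): Let $\mathcal{X}\subset\mathbb{R}^d$, $\mathcal{Y}=\{1,\dots,c\}$. A distribution $D$ over $\mathcal{X}\times\mathcal{Y}$ is $(k_1,\dots,k_n)$-separable with $\delta$-margin ($\delta>0$) if there exist $a_1,\dots,a_n\in\mathbb{R}^d$ with $\|a_s\|_2=1$ and constants $b_{s,1}<b_{s,2}<\cdots<b_{s,k_s+1}$ for each $s\in\{1,\dots,n\}$ such that, for each multi-index $\mathbf{i}=(i_1,\dots,i_n)$ with $i_s\in\{1,\dots,k_s\}$ and $\mathcal{X}_{\mathbf{i}}=\{x\in\mathcal{X}: b_{s,i_s}+\delta<a_s^Tx<b_{s,i_s+1}-\delta \text{ for all } 1\le s\le n\}$: (i) there is $y_{\mathbf{i}}\in\mathcal{Y}$ with $\mathbb{P}_{(x,y)\sim D}(y=y_{\mathbf{i}}\mid x\in\mathcal{X}_{\mathbf{i}})=1$; (ii) $\mathbb{P}_{(x,y)\sim D}\big(x\in\bigcup_{\mathbf{i}}\mathcal{X}_{\mathbf{i}}\big)=1$. *)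

theory Defs
  imports "HOL-Probability.Probability"
begin

definition sigmoid :: "real \<Rightarrow> real" where
  "sigmoid t = 1 / (1 + exp (- t))"

definition cell ::
  "(real ^ ('d::finite)) set \<Rightarrow> nat \<Rightarrow> (nat \<Rightarrow> real ^ 'd) \<Rightarrow> (nat \<Rightarrow> nat \<Rightarrow> real) \<Rightarrow> real
    \<Rightarrow> (nat \<Rightarrow> nat) \<Rightarrow> (real ^ 'd) set" where
  "cell X n a b \<delta> i = {x \<in> X. \<forall>s\<in>{1..n}.
       b s (i s) + \<delta> < a s \<bullet> x \<and> a s \<bullet> x < b s (i s + 1) - \<delta>}"

definition multi_index :: "nat \<Rightarrow> (nat \<Rightarrow> nat) \<Rightarrow> (nat \<Rightarrow> nat) \<Rightarrow> bool" where
  "multi_index n k i \<longleftrightarrow> (\<forall>s\<in>{1..n}. i s \<in> {1..k s})"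

text \<open>D is a distribution over X \<times> {1..c} that is (k_1,...,k_n)-separable with delta-margin.
  Conditional probability one is rendered as "almost surely, x in the cell implies y = y_i".\<close>
definition separable ::
  "((real ^ ('d::finite)) \<times> nat) measure \<Rightarrow> (real ^ 'd) set \<Rightarrow> nat \<Rightarrow> nat \<Rightarrow> (nat \<Rightarrow> nat) \<Rightarrow> real \<Rightarrow> bool" where
  "separable D X c n k \<delta> \<longleftrightarrow> \<delta> > 0 \<and>
     (\<exists>a b. (\<forall>s\<in>{1..n}. norm (a s) = 1) \<and>
       (\<forall>s\<in>{1..n}. \<forall>j\<in>{1..k s}. b s j < b s (j + 1)) \<and>
       (\<forall>i. multi_index n k i \<longrightarrow>
          (\<exists>yi\<in>{1..c}. AE z in D. fst z \<in> cell X n a b \<delta> i \<longrightarrow> snd z = yi)) \<and>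
       (AE z in D. \<exists>i. multi_index n k i \<and> fst z \<in> cell X n a b \<delta> i))"

text \<open>The 4-layer network.  U s = u_s, beta s l, v s l, u s (s = 1..n), gamma t and
  row W t of W (t = 1..K).\<close>
definition net ::
  "nat \<Rightarrow> (nat \<Rightarrow> nat) \<Rightarrow> (nat \<Rightarrow> real ^ ('d::finite)) \<Rightarrow> (nat \<Rightarrow> nat \<Rightarrow> real) \<Rightarrow> (nat \<Rightarrow> nat \<Rightarrow> real)
    \<Rightarrow> (nat \<Rightarrow> real) \<Rightarrow> (nat \<Rightarrow> real) \<Rightarrow> (nat \<Rightarrow> real ^ ('m::finite)) \<Rightarrow> real ^ 'd \<Rightarrow> real ^ 'm" where
  "net n k U \<beta> v u \<gamma> W x =
     (let p = (\<lambda>s. \<Sum>l=1..k s. v s l * sigmoid (U s \<bullet> x - \<beta> s l));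
          q = (\<Sum>s=1..n. u s * p s)
      in \<Sum>t=1..(\<Prod>s=1..n. k s). sigmoid (q - \<gamma> t) *\<^sub>R W t)"

end

theory Submission
  imports Defs
begin

text \<open>A steep sigmoid is close to a step function away from its jump, so a sum of steep
  sigmoids with increasing thresholds counts how many thresholds lie below its argument.
  The first layer thus recovers, on each cell, the index i_s of the slab of direction a_s
  containing x.  The second layer combines these indices with mixed-radix weights into
  a number within 1/4 of C + r, where r < K is the position of the multi-index in the
  mixed-radix enumeration of all K cells.  The last layer thresholds this number at the
  half-integers C + t - 3/2 (t = 1..K), producing the indicators of t \<le> r + 1; choosing
  the output rows as successive differences of the targets, these indicators telescope
  to the target of cell r.\<close>

lemma sigmoid_minus: "sigmoid (- t) = 1 - sigmoid t"
proof -
  have "1 + exp (- t) > 0" "1 + exp t > 0" by (smt (verit) exp_gt_zero)+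
  moreover have "exp t * exp (- t) = 1" by (simp add: exp_minus_inverse)
  ultimately show ?thesis unfolding sigmoid_def by (simp add: field_simps)
qed

lemma abs_sigmoid_le_inverse:
  assumes "T > 0" "t \<le> - T"
  shows "\<bar>sigmoid t\<bar> \<le> 1 / T"
proof -
  have "1 + exp (- t) \<ge> T" using exp_ge_add_one_self[of "- t"] assms by linarith
  then have "1 / (1 + exp (- t)) \<le> 1 / T" using assms by (intro divide_left_mono) auto
  moreover have "1 + exp (- t) > 0" by (smt (verit) exp_gt_zero)
  ultimately show ?thesis by (simp add: sigmoid_def)
qed

lemma abs_sigmoid_minus_one_le_inverse:
  assumes "T > 0" "T \<le> t"
  shows "\<bar>sigmoid t - 1\<bar> \<le> 1 / T"
  using abs_sigmoid_le_inverse[of T "- t"] assms sigmoid_minus[of t] by auto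

lemma sigmoid_staircase_sum:
  fixes w :: "'i \<Rightarrow> 'a::real_normed_vector" and \<theta> :: "'i \<Rightarrow> real"
  assumes "finite A" "M > 0" "\<delta> > 0" and margin: "\<And>l. l \<in> A \<Longrightarrow> \<delta> \<le> \<bar>z - \<theta> l\<bar>"
  shows "norm ((\<Sum>l\<in>A. sigmoid (M * (z - \<theta> l)) *\<^sub>R w l) - (\<Sum>l\<in>{l\<in>A. \<theta> l < z}. w l))
           \<le> (\<Sum>l\<in>A. norm (w l)) / (M * \<delta>)"
proof -
  define step where "step l = (if \<theta> l < z then 1 else 0 :: real)" for l
  have Md: "M * \<delta> > 0" using assms by simp
  have close: "\<bar>sigmoid (M * (z - \<theta> l)) - step l\<bar> \<le> 1 / (M * \<delta>)" if "l \<in> A" for l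
  proof (cases "\<theta> l < z")
    case True
    then have "M * \<delta> \<le> M * (z - \<theta> l)"
      using margin[OF that] assms(2) by (intro mult_left_mono) auto
    then show ?thesis using abs_sigmoid_minus_one_le_inverse[OF Md] True by (simp add: step_def)
  next
    case False
    then have "M * \<delta> \<le> M * (\<theta> l - z)"
      using margin[OF that] assms(2) by (intro mult_left_mono) auto
    then have "M * (z - \<theta> l) \<le> - (M * \<delta>)" by (simp add: right_diff_distrib)
    then show ?thesis using abs_sigmoid_le_inverse[OF Md] False by (simp add: step_def)
  qed
  have "(\<Sum>l\<in>{l\<in>A. \<theta> l < z}. w l) = (\<Sum>l\<in>A. step l *\<^sub>R w l)"
    unfolding sum.inter_filter[OF assms(1)] by (rule sum.cong) (simp_all add: step_def)
  then have "norm ((\<Sum>l\<in>A. sigmoid (M * (z - \<theta> l)) *\<^sub>R w l) - (\<Sum>l\<in>{l\<in>A. \<theta> l < z}. w l))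
      = norm (\<Sum>l\<in>A. (sigmoid (M * (z - \<theta> l)) - step l) *\<^sub>R w l)"
    by (simp add: scaleR_diff_left sum_subtractf)
  also have "\<dots> \<le> (\<Sum>l\<in>A. 1 / (M * \<delta>) * norm (w l))"
    by (rule order_trans[OF norm_sum sum_mono])
      (simp add: close mult_right_mono del: times_divide_eq_left)
  finally show ?thesis by (simp add: sum_divide_distrib)
qed

lemma increasing_steps_mono:
  fixes b :: "nat \<Rightarrow> real"
  assumes "\<forall>j\<in>{1..k}. b j < b (j + 1)" "1 \<le> l" "l \<le> j" "j \<le> k + 1"
  shows "b l \<le> b j"
  using assms(3,4)
proof (induction j rule: dec_induct)
  case (step j)
  then have "b j < b (j + 1)" using assms(1,2) by auto
  then show ?case using step by simp
qed simp

lemma sigmoid_staircase_count: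
  fixes b :: "nat \<Rightarrow> real"
  assumes incr: "\<forall>j\<in>{1..k}. b j < b (j + 1)" and i: "i \<in> {1..k}"
    and y: "b i + \<delta> < y" "y < b (i + 1) - \<delta>" and M: "M > 0" and \<delta>: "\<delta> > 0"
  shows "\<bar>(\<Sum>l=1..k. sigmoid (M * (y - b l))) - real i\<bar> \<le> real k / (M * \<delta>)"
proof -
  have below: "b l \<le> b i" if "l \<in> {1..i}" for l
    using increasing_steps_mono[OF incr, of l i] that i by auto
  have above: "b (i + 1) \<le> b l" if "l \<in> {1..k}" "i < l" for l
    using increasing_steps_mono[OF incr, of "i + 1" l] that by auto
  have "\<delta> \<le> \<bar>y - b l\<bar>" if "l \<in> {1..k}" for l
    using below[of l] above[OF that] y that by (cases "l \<le> i") auto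
  moreover have "{l \<in> {1..k}. b l < y} = {1..i}"
  proof (intro equalityI subsetI)
    fix l assume "l \<in> {l \<in> {1..k}. b l < y}"
    then show "l \<in> {1..i}" using above[of l] y \<delta> by (cases "l \<le> i") auto
  next
    fix l assume "l \<in> {1..i}"
    then show "l \<in> {l \<in> {1..k}. b l < y}" using below[of l] y i \<delta> by auto
  qed
  ultimately have "\<bar>(\<Sum>l=1..k. sigmoid (M * (y - b l)) *\<^sub>R 1) - (\<Sum>l=1..i. 1)\<bar>
      \<le> (\<Sum>l=1..k. norm (1 :: real)) / (M * \<delta>)"
    using sigmoid_staircase_sum[of "{1..k}" M \<delta> y b "\<lambda>_. 1 :: real"] M \<delta>
    by (metis (no_types, lifting) finite_atLeastAtMost real_norm_def)
  then show ?thesis by simp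
qed

lemma sigmoid_staircase_half_integers:
  fixes w :: "nat \<Rightarrow> 'a::real_normed_vector"
  assumes q: "\<bar>q - (C + real r)\<bar> \<le> 1/4" and "r < K" "L > 0"
  shows "norm ((\<Sum>t=1..K. sigmoid (L * (q - (C + real t - 3/2))) *\<^sub>R w t) - (\<Sum>t=1..Suc r. w t))
           \<le> 4 * (\<Sum>t=1..K. norm (w t)) / L"
proof -
  have q_bounds: "C + real r - 1/4 \<le> q" "q \<le> C + real r + 1/4"
    using q unfolding abs_le_iff by linarith+
  have "1/4 \<le> \<bar>q - (C + real t - 3/2)\<bar>" for t
  proof (cases "t \<le> r + 1")
    case True
    then have "real t \<le> real r + 1" by simp
    then show ?thesis using q_bounds by linarith
  next
    case False
    then have "real r + 2 \<le> real t" by simp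
    then show ?thesis using q_bounds by linarith
  qed
  moreover have "{t \<in> {1..K}. C + real t - 3/2 < q} = {1..Suc r}"
  proof (intro equalityI subsetI)
    fix t assume t: "t \<in> {t \<in> {1..K}. C + real t - 3/2 < q}"
    then have "real t < real r + 2" using q_bounds by simp
    then show "t \<in> {1..Suc r}" using t by simp
  next
    fix t assume "t \<in> {1..Suc r}"
    then have "real t \<le> real r + 1" by simp
    then show "t \<in> {t \<in> {1..K}. C + real t - 3/2 < q}"
      using \<open>t \<in> {1..Suc r}\<close> \<open>r < K\<close> q_bounds by auto
  qed
  ultimately show ?thesis
    using sigmoid_staircase_sum[of "{1..K}" L "1/4" q "\<lambda>t. C + real t - 3/2" w] \<open>L > 0\<close>
    by (simp add: field_simps)
qed

definition radix_weight :: "(nat \<Rightarrow> nat) \<Rightarrow> nat \<Rightarrow> nat" where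
  "radix_weight k s = (\<Prod>r=1..s. k r)"

definition radix_encode :: "nat \<Rightarrow> (nat \<Rightarrow> nat) \<Rightarrow> (nat \<Rightarrow> nat) \<Rightarrow> nat" where
  "radix_encode n k i = (\<Sum>s=1..n. (i s - 1) * radix_weight k (s - 1))"

definition radix_digit :: "(nat \<Rightarrow> nat) \<Rightarrow> nat \<Rightarrow> nat \<Rightarrow> nat" where
  "radix_digit k s r = r div radix_weight k (s - 1) mod k s + 1"

lemma radix_weight_Suc: "radix_weight k (Suc s) = radix_weight k s * k (Suc s)"
  unfolding radix_weight_def by (simp add: prod.nat_ivl_Suc')

lemma radix_weight_dvd: "s \<le> n \<Longrightarrow> radix_weight k s dvd radix_weight k n"
  unfolding radix_weight_def by (rule prod_dvd_prod_subset) auto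

lemma radix_encode_Suc:
  "radix_encode (Suc n) k i = radix_encode n k i + (i (Suc n) - 1) * radix_weight k n"
  unfolding radix_encode_def by simp

lemma multi_index_Suc_iff:
  "multi_index (Suc n) k i \<longleftrightarrow> multi_index n k i \<and> i (Suc n) \<in> {1..k (Suc n)}"
  unfolding multi_index_def by (auto simp: le_Suc_eq)

lemma radix_encode_less: "multi_index n k i \<Longrightarrow> radix_encode n k i < radix_weight k n"
proof (induction n)
  case 0
  then show ?case by (simp add: radix_encode_def radix_weight_def)
next
  case (Suc n)
  then have IH: "radix_encode n k i < radix_weight k n" and i: "i (Suc n) \<in> {1..k (Suc n)}"
    by (simp_all add: multi_index_Suc_iff)
  have "radix_encode (Suc n) k i < radix_weight k n + (i (Suc n) - 1) * radix_weight k n"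
    using IH by (simp add: radix_encode_Suc)
  also have "\<dots> = i (Suc n) * radix_weight k n" using i by (cases "i (Suc n)") auto
  also have "\<dots> \<le> radix_weight k (Suc n)" using i by (simp add: radix_weight_Suc)
  finally show ?case .
qed

lemma radix_digit_encode:
  "multi_index n k i \<Longrightarrow> s \<in> {1..n} \<Longrightarrow> radix_digit k s (radix_encode n k i) = i s"
proof (induction n)
  case (Suc n)
  then have mi: "multi_index n k i" and i: "i (Suc n) \<in> {1..k (Suc n)}"
    by (simp_all add: multi_index_Suc_iff)
  show ?case
  proof (cases "s = Suc n")
    case True
    have "radix_encode (Suc n) k i div radix_weight k n = i (Suc n) - 1"
      using radix_encode_less[OF mi] by (simp add: radix_encode_Suc div_add1_eq)
    moreover have "i (Suc n) - 1 < k (Suc n)" using i by auto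
    ultimately show ?thesis using True i by (simp add: radix_digit_def)
  next
    case False
    with Suc.prems have s: "s \<in> {1..n}" by auto
    obtain R where R: "radix_weight k n = radix_weight k s * R"
      using radix_weight_dvd[of s n k] s by (auto elim: dvdE)
    define c where "c = (i (Suc n) - 1) * R"
    have "radix_encode (Suc n) k i = radix_encode n k i + (k s * c) * radix_weight k (s - 1)"
      using s radix_weight_Suc[of k "s - 1"] by (simp add: radix_encode_Suc R c_def ac_simps)
    moreover have "radix_weight k (s - 1) > 0"
      using dvd_pos_nat[OF _ radix_weight_dvd[of "s - 1" n k]] radix_encode_less[OF mi] s by auto
    ultimately have "radix_digit k s (radix_encode (Suc n) k i) = radix_digit k s (radix_encode n k i)"
      by (simp add: radix_digit_def)
    then show ?thesis using Suc.IH[OF mi s] by simp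
  qed
qed simp

lemma radix_encode_plus_weights:
  assumes "multi_index n k i"
  shows "real (radix_encode n k i) + (\<Sum>s=1..n. real (radix_weight k (s - 1)))
           = (\<Sum>s=1..n. real (radix_weight k (s - 1)) * real (i s))"
  unfolding radix_encode_def of_nat_sum sum.distrib[symmetric]
proof (rule sum.cong)
  fix s assume "s \<in> {1..n}"
  then have "1 \<le> i s" using assms unfolding multi_index_def by auto
  then show "real ((i s - 1) * radix_weight k (s - 1)) + real (radix_weight k (s - 1))
      = real (radix_weight k (s - 1)) * real (i s)"
    by (simp add: of_nat_diff algebra_simps)
qed simp

lemma sum_telescope_from_one:
  "(\<Sum>t=1..Suc r. H t - H (t - 1)) = H (Suc r) - (H 0 :: 'a::ab_group_add)"
  unfolding One_nat_def sum.shift_bounds_cl_Suc_ivl by (simp add: sum_Suc_diff)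

lemma hidden_layers_encode_cell:
  fixes a :: "nat \<Rightarrow> real ^ ('d::finite)" and b :: "nat \<Rightarrow> nat \<Rightarrow> real" and k :: "nat \<Rightarrow> nat"
  defines "\<omega> s \<equiv> real (radix_weight k (s - 1))"
  assumes incr: "\<forall>s\<in>{1..n}. \<forall>j\<in>{1..k s}. b s j < b s (j + 1)"
    and "\<delta> > 0" "M > 0" and M_large: "4 * (\<Sum>s=1..n. \<omega> s * real (k s)) \<le> M * \<delta>"
    and i: "multi_index n k i" and x: "x \<in> cell X n a b \<delta> i"
  shows "\<bar>(\<Sum>s=1..n. \<omega> s * (\<Sum>l=1..k s. sigmoid (M * (a s \<bullet> x - b s l))))
           - (real (radix_encode n k i) + (\<Sum>s=1..n. \<omega> s))\<bar> \<le> 1/4"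
proof -
  define p where "p s = (\<Sum>l=1..k s. sigmoid (M * (a s \<bullet> x - b s l)))" for s
  have p: "\<bar>p s - real (i s)\<bar> \<le> real (k s) / (M * \<delta>)" if "s \<in> {1..n}" for s
    unfolding p_def using x that i incr \<open>M > 0\<close> \<open>\<delta> > 0\<close>
    by (intro sigmoid_staircase_count) (auto simp: cell_def multi_index_def)
  have "\<bar>(\<Sum>s=1..n. \<omega> s * p s) - (real (radix_encode n k i) + (\<Sum>s=1..n. \<omega> s))\<bar>
      = \<bar>\<Sum>s=1..n. \<omega> s * (p s - real (i s))\<bar>"
    using radix_encode_plus_weights[OF i] by (simp add: \<omega>_def sum_subtractf right_diff_distrib)
  also have "\<dots> \<le> (\<Sum>s=1..n. \<omega> s * (real (k s) / (M * \<delta>)))"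
    by (rule order_trans[OF sum_abs sum_mono])
      (simp add: abs_mult \<omega>_def mult_left_mono[OF p] del: times_divide_eq_right)
  also have "\<dots> = (\<Sum>s=1..n. \<omega> s * real (k s)) / (M * \<delta>)"
    by (simp add: sum_divide_distrib)
  also have "\<dots> \<le> 1/4"
    using M_large \<open>M > 0\<close> \<open>\<delta> > 0\<close> by (simp add: field_simps)
  finally show ?thesis by (simp add: p_def)
qed

lemma net_approximates_on_cells:
  fixes a :: "nat \<Rightarrow> real ^ ('d::finite)" and b :: "nat \<Rightarrow> nat \<Rightarrow> real"
    and F :: "(nat \<Rightarrow> nat) \<Rightarrow> real ^ ('m::finite)"
  assumes incr: "\<forall>s\<in>{1..n}. \<forall>j\<in>{1..k s}. b s j < b s (j + 1)"
    and "\<delta> > 0" "\<epsilon> > 0"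
    and F_local: "\<And>i i'. (\<forall>s\<in>{1..n}. i s = i' s) \<Longrightarrow> F i = F i'"
  obtains U \<beta> v u \<gamma> W where "\<And>i x. multi_index n k i \<Longrightarrow> x \<in> cell X n a b \<delta> i \<Longrightarrow>
    norm (net n k U \<beta> v u \<gamma> W x - F i) \<le> \<epsilon>"
proof -
  define H where "H t = (case t of 0 \<Rightarrow> 0 | Suc r \<Rightarrow> F (\<lambda>s. radix_digit k s r))" for t
  define W where "W t = H t - H (t - 1)" for t
  define K where "K = radix_weight k n"
  define \<omega> where "\<omega> s = real (radix_weight k (s - 1))" for s
  define C where "C = (\<Sum>s=1..n. \<omega> s)"
  define M where "M = 4 * (\<Sum>s=1..n. \<omega> s * real (k s)) / \<delta> + 1"
  define S where "S = (\<Sum>t=1..K. norm (W t))"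
  define L where "L = 4 * (S / \<epsilon> + 1)"
  define U where "U s = M *\<^sub>R a s" for s
  define \<beta> where "\<beta> s l = M * b s l" for s l
  define v where "v s l = (1 :: real)" for s l :: nat
  define u where "u s = L * \<omega> s" for s
  define \<gamma> where "\<gamma> t = L * (C + real t - 3/2)" for t :: nat
  have "(\<Sum>s=1..n. \<omega> s * real (k s)) \<ge> 0" unfolding \<omega>_def by (simp add: sum_nonneg)
  then have M: "M > 0" and M_large: "4 * (\<Sum>s=1..n. \<omega> s * real (k s)) \<le> M * \<delta>"
    using \<open>\<delta> > 0\<close> by (simp_all add: M_def field_simps add_nonneg_pos)
  have "S \<ge> 0" unfolding S_def by (simp add: sum_nonneg)
  then have L: "L > 0" and L_large: "4 * S / L \<le> \<epsilon>"
    using \<open>\<epsilon> > 0\<close> by (simp_all add: L_def field_simps add_nonneg_pos)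
  show ?thesis
  proof (rule that[of U \<beta> v u \<gamma> W])
    fix i x assume i: "multi_index n k i" and x: "x \<in> cell X n a b \<delta> i"
    define q where "q = (\<Sum>s=1..n. \<omega> s * (\<Sum>l=1..k s. sigmoid (M * (a s \<bullet> x - b s l))))"
    define r where "r = radix_encode n k i"
    have q: "\<bar>q - (C + real r)\<bar> \<le> 1/4"
      using hidden_layers_encode_cell[OF incr \<open>\<delta> > 0\<close> M _ i x] M_large
      by (simp add: q_def C_def r_def \<omega>_def add.commute)
    have "net n k U \<beta> v u \<gamma> W x = (\<Sum>t=1..K. sigmoid (L * (q - (C + real t - 3/2))) *\<^sub>R W t)"
      by (simp add: net_def K_def radix_weight_def U_def \<beta>_def v_def u_def \<gamma>_def q_def
          sum_distrib_left right_diff_distrib ac_simps)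
    moreover have "(\<Sum>t=1..Suc r. W t) = F i"
      using sum_telescope_from_one[of H r] F_local[of "\<lambda>s. radix_digit k s r" i]
        radix_digit_encode[OF i]
      by (simp add: W_def H_def r_def)
    ultimately show "norm (net n k U \<beta> v u \<gamma> W x - F i) \<le> \<epsilon>"
      using sigmoid_staircase_half_integers[OF q _ L, of K W] radix_encode_less[OF i] L_large
      by (simp add: K_def r_def S_def)
  qed
qed

lemma cell_restrict: "cell X n a b \<delta> (restrict i {1..n}) = cell X n a b \<delta> i"
  unfolding cell_def by auto

lemma separable_obtains_cell_labels:
  assumes "separable D X c n k \<delta>"
  obtains a b Y
  where "AE z in D. \<exists>i. multi_index n k i \<and> fst z \<in> cell X n a b \<delta> i \<and> snd z = Y i"
    and "\<delta> > 0" "\<forall>s\<in>{1..n}. \<forall>j\<in>{1..k s}. b s j < b s (j + 1)"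
    and "\<And>i i'. (\<forall>s\<in>{1..n}. i s = i' s) \<Longrightarrow> Y i = Y i'"
proof -
  obtain a b where "\<delta> > 0" and incr: "\<forall>s\<in>{1..n}. \<forall>j\<in>{1..k s}. b s j < b s (j + 1)"
    and labels: "\<forall>i. multi_index n k i \<longrightarrow>
          (\<exists>y\<in>{1..c}. AE z in D. fst z \<in> cell X n a b \<delta> i \<longrightarrow> snd z = y)"
    and cover: "AE z in D. \<exists>i. multi_index n k i \<and> fst z \<in> cell X n a b \<delta> i"
    using assms unfolding separable_def by blast
  txt \<open>Labels are chosen on the finitely many multi-indices restricted to {1..n}, so that
    the almost-sure statements for the individual cells can be intersected.\<close>
  define I where "I = PiE {1..n} (\<lambda>s. {1..k s})"
  have labelled: "\<forall>i\<in>I. \<exists>y. AE z in D. fst z \<in> cell X n a b \<delta> i \<longrightarrow> snd z = y"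
  proof
    fix i assume "i \<in> I"
    then have "multi_index n k i" by (simp add: I_def multi_index_def PiE_iff)
    then show "\<exists>y. AE z in D. fst z \<in> cell X n a b \<delta> i \<longrightarrow> snd z = y" using labels by blast
  qed
  obtain label
    where label: "\<And>i. i \<in> I \<Longrightarrow> AE z in D. fst z \<in> cell X n a b \<delta> i \<longrightarrow> snd z = label i"
    using bchoice[OF labelled] by blast
  have "finite I" unfolding I_def by (simp add: finite_PiE)
  then have "AE z in D. \<forall>i\<in>I. fst z \<in> cell X n a b \<delta> i \<longrightarrow> snd z = label i"
    using label by (rule AE_finite_allI)
  with cover have "AE z in D. \<exists>i. multi_index n k i \<and> fst z \<in> cell X n a b \<delta> i
      \<and> snd z = label (restrict i {1..n})"
  proof eventually_elim
    case (elim z)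
    then obtain i where "multi_index n k i" "fst z \<in> cell X n a b \<delta> i" by blast
    moreover have "restrict i {1..n} \<in> I"
      using \<open>multi_index n k i\<close> by (simp add: I_def multi_index_def)
    ultimately show ?case using elim cell_restrict by metis
  qed
  moreover have "label (restrict i {1..n}) = label (restrict i' {1..n})"
    if "\<forall>s\<in>{1..n}. i s = i' s" for i i'
    using that by (simp cong: restrict_cong)
  ultimately show thesis
    using that[where Y = "\<lambda>i. label (restrict i {1..n})"] \<open>\<delta> > 0\<close> incr by blast
qed

theorem theorem2:
  fixes D :: "((real ^ ('d::finite)) \<times> nat) measure"
    and X :: "(real ^ 'd) set"
    and c n :: nat and k :: "nat \<Rightarrow> nat" and \<delta> \<epsilon> :: real
    and f :: "nat \<Rightarrow> real ^ ('m::finite)"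
  assumes "prob_space D"
    and "AE z in D. fst z \<in> X \<and> snd z \<in> {1..c}"
    and "separable D X c n k \<delta>"
    and "inj_on f {1..c}"
    and "\<epsilon> > 0"
  shows "\<exists>U \<beta> v u \<gamma> W. AE z in D.
           (\<forall>j. \<bar>net n k U \<beta> v u \<gamma> W (fst z) $ j - f (snd z) $ j\<bar> \<le> \<epsilon>)"
proof -
  obtain a b Y
    where labelled: "AE z in D. \<exists>i. multi_index n k i \<and> fst z \<in> cell X n a b \<delta> i \<and> snd z = Y i"
    and "\<delta> > 0" and incr: "\<forall>s\<in>{1..n}. \<forall>j\<in>{1..k s}. b s j < b s (j + 1)"
    and Y_local: "\<And>i i'. (\<forall>s\<in>{1..n}. i s = i' s) \<Longrightarrow> Y i = Y i'"
    using separable_obtains_cell_labels[OF assms(3)] by blast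
  have f_Y_local: "f (Y i) = f (Y i')" if "\<forall>s\<in>{1..n}. i s = i' s" for i i'
    using Y_local[OF that] by simp
  obtain U \<beta> v u \<gamma> W where approx: "\<And>i x. multi_index n k i \<Longrightarrow> x \<in> cell X n a b \<delta> i \<Longrightarrow>
      norm (net n k U \<beta> v u \<gamma> W x - f (Y i)) \<le> \<epsilon>"
    using net_approximates_on_cells[where F = "\<lambda>i. f (Y i)" and X = X and a = a,
          OF incr \<open>\<delta> > 0\<close> \<open>\<epsilon> > 0\<close> f_Y_local] by blast
  from labelled have "AE z in D. \<forall>j. \<bar>net n k U \<beta> v u \<gamma> W (fst z) $ j - f (snd z) $ j\<bar> \<le> \<epsilon>"
  proof eventually_elim
    case (elim z)
    then obtain i where "multi_index n k i" "fst z \<in> cell X n a b \<delta> i" "snd z = Y i" by blast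
    then have "norm (net n k U \<beta> v u \<gamma> W (fst z) - f (snd z)) \<le> \<epsilon>" using approx by simp
    then show ?case using component_le_norm_cart order_trans by fastforce
  qed
  then show ?thesis by blast
qed

end
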